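(* For rooted trees $T_1$ and $T_2$, the quotient of the rooted tree $T_1+T_2$ satisfies $$q_{T_1+T_2}=\frac{q_{T_1}}{1-z\,q_{T_1}q_{T_2}}=\frac{z+1-z\,q_{T_2'}}{(z+1-z\,q_{T_1'})(z+1-z\,q_{T_2'})-z}.$$
   Context: For a tree $T$ on $n$ vertices with adjacency characteristic polynomial $\chi_T$, its reciprocal polynomial is $R_T(z)=z^{n/2}\chi_T(\sqrt z+1/\sqrt z)$. A rooted tree is a tree with a distinguished vertex $r$ (its root). For a rooted tree $T$, $T'$ denotes the rooted forest $T-\{r\}$, the root of each component being the vertex adjacent to $r$ in $T$. The quotient of a rooted tree $T$ is the rational function $q_T=\prod_iR_{T_i}(z)/R_T(z)$, where the $T_i$ are the trees of $T'$ (empty product $=1$); the quotient of a rooted forest is the sum of the quotients of its trees (so the quotient of the empty forest is $0$). For rooted trees $T_1,T_2$, the rooted tree $T_1+T_2$ is obtained by joining the roots of $T_1$ and $T_2$ by an edge, its root being the root of $T_1$. *)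

theory Defs
  imports "Jordan_Normal_Form.Char_Poly" "HOL-Library.List_Lexorder"
    "HOL-Computational_Algebra.Fraction_Field"
begin

text \<open>Rooted trees: a root with an ordered list of rooted subtrees (the components
  of T - {r}, each rooted at the neighbour of r).\<close>
datatype rtree = Node "rtree list"

fun children :: "rtree \<Rightarrow> rtree list" where
  "children (Node ts) = ts"

text \<open>Vertices are addressed by paths from the root; the root is the empty path.\<close>
function verts :: "rtree \<Rightarrow> nat list set" where
  "verts (Node ts) = insert [] (\<Union>i\<in>{..<length ts}. (Cons i) ` verts (ts ! i))"
  by pat_completeness auto
termination
proof (relation "measure size")
  show "wf (measure size)" by simp
next
  fix ts :: "rtree list" and x assume "x \<in> {..<length ts}"
  then have "ts ! x \<in> set ts" by simp
  then have "size (ts ! x) \<le> size_list size ts" by (rule size_list_estimation') simp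
  then show "(ts ! x, Node ts) \<in> measure size" by simp
qed

definition adj :: "rtree \<Rightarrow> nat list \<Rightarrow> nat list \<Rightarrow> bool" where
  "adj T p q \<longleftrightarrow> p \<in> verts T \<and> q \<in> verts T \<and> (\<exists>i. q = p @ [i] \<or> p = q @ [i])"

definition vlist :: "rtree \<Rightarrow> nat list list" where
  "vlist T = sorted_list_of_set (verts T)"

definition nverts :: "rtree \<Rightarrow> nat" where
  "nverts T = card (verts T)"

definition adj_mat :: "rtree \<Rightarrow> real mat" where
  "adj_mat T = mat (length (vlist T)) (length (vlist T))
     (\<lambda>(i,j). if adj T (vlist T ! i) (vlist T ! j) then 1 else 0)"

definition chi :: "rtree \<Rightarrow> real poly" where
  "chi T = char_poly (adj_mat T)"

text \<open>Reciprocal polynomial R_T(z) = z^(n/2) chi_T(sqrt z + 1/sqrt z)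
  (a polynomial in z, determined by its values for z > 0).\<close>
definition recip :: "rtree \<Rightarrow> real poly" where
  "recip T = (THE p. \<forall>z::real. z > 0 \<longrightarrow>
      poly p z = z powr (real (nverts T) / 2) * poly (chi T) (sqrt z + 1 / sqrt z))"

text \<open>Rational functions in z: the fraction field of real polynomials.\<close>
definition Z :: "real poly fract" where
  "Z = Fract [:0, 1:] 1"

definition tquot :: "rtree \<Rightarrow> real poly fract" where
  "tquot T = Fract (prod_list (map recip (children T))) (recip T)"

definition fquot :: "rtree list \<Rightarrow> real poly fract" where
  "fquot F = sum_list (map tquot F)"

text \<open>T1 + T2: join the roots by an edge, root of T1 is the root.\<close>
definition tjoin :: "rtree \<Rightarrow> rtree \<Rightarrow> rtree" where
  "tjoin T1 T2 = Node (children T1 @ [T2])"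

end

(* Joining the roots of T1 and T2 couples the two adjacency matrices only in the two root
   entries, so expanding det (x I - A) along the two root rows gives
     chi(T1 + T2) = chi(T1) chi(T2) - chi(T1') chi(T2'),
   where chi of a forest is the product over its trees. Substituting x = sqrt z + 1 / sqrt z and
   multiplying by z^(n/2) turns this into R(T1 + T2) = R(T1) R(T2) - z R(T1') R(T2'). Applied to
   the last child of a tree T, the same recurrence gives z + 1 - z q(T') = R(T) / R(T'), and both
   formulas for q(T1 + T2) become identities between fractions of nonzero polynomials. *)

theory Submission
  imports Defs "HOL-Computational_Algebra.Polynomial_Factorial"
begin

section \<open>Determinants of block matrices coupled at a corner\<close>

definition corner_mat :: "nat \<Rightarrow> nat \<Rightarrow> 'a :: zero \<Rightarrow> 'a mat" where
  "corner_mat m n c = mat m n (\<lambda>(i,j). if i = 0 \<and> j = 0 then c else 0)"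

lemma corner_mat_carrier [simp]: "corner_mat m n c \<in> carrier_mat m n"
  by (simp add: corner_mat_def)

lemma det_add_row:
  fixes N N1 N2 :: "'a :: comm_ring_1 mat"
  assumes carrier: "N \<in> carrier_mat n n" "N1 \<in> carrier_mat n n" "N2 \<in> carrier_mat n n"
    and k: "k < n"
    and row_k: "\<And>j. j < n \<Longrightarrow> N $$ (k,j) = N1 $$ (k,j) + N2 $$ (k,j)"
    and rows: "\<And>i j. i < n \<Longrightarrow> j < n \<Longrightarrow> i \<noteq> k \<Longrightarrow> N1 $$ (i,j) = N $$ (i,j) \<and> N2 $$ (i,j) = N $$ (i,j)"
  shows "det N = det N1 + det N2"
proof -
  let ?R = "\<lambda>v. mat\<^sub>r n n (\<lambda>i. if i = k then v else row N i)"
  have "det (?R (row N1 k + row N2 k)) = det (?R (row N1 k)) + det (?R (row N2 k))"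
    using det_row_add[where a = "\<lambda>_. row N1 k" and b = "\<lambda>_. row N2 k" and c = "\<lambda>i. row N i"] carrier k
    by auto
  moreover have "?R (row N1 k + row N2 k) = N" "?R (row N1 k) = N1" "?R (row N2 k) = N2"
    by (rule eq_matI; use carrier row_k rows in auto)+
  ultimately show ?thesis by simp
qed

lemma det_row_single_entry:
  fixes M :: "'a :: comm_ring_1 mat"
  assumes M: "M \<in> carrier_mat n n" and "i < n" "j < n"
    and zero: "\<And>l. l < n \<Longrightarrow> l \<noteq> j \<Longrightarrow> M $$ (i,l) = 0"
  shows "det M = M $$ (i,j) * cofactor M i j"
proof -
  have "det M = (\<Sum>l<n. M $$ (i,l) * cofactor M i l)"
    by (rule laplace_expansion_row[OF M \<open>i < n\<close>])
  also have "\<dots> = (\<Sum>l<n. if l = j then M $$ (i,j) * cofactor M i j else 0)"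
    by (rule sum.cong) (use zero in auto)
  finally show ?thesis using \<open>j < n\<close> by simp
qed

lemma mat_delete_four_block_corner:
  assumes A: "A \<in> carrier_mat n1 n1" and B: "B \<in> carrier_mat n2 n2" and "0 < n1" "0 < n2"
  shows "mat_delete (mat_delete (four_block_mat A (corner_mat n1 n2 c) (corner_mat n2 n1 d) B) 0 n1) (n1 - 1) 0
    = four_block_mat (mat_delete A 0 0) (0\<^sub>m (n1 - 1) (n2 - 1)) (0\<^sub>m (n2 - 1) (n1 - 1)) (mat_delete B 0 0)"
  by (rule eq_matI) (use assms in \<open>auto simp: mat_delete_def corner_mat_def Suc_diff_le\<close>)

lemma det_four_block_corner_zero_first_rows:
  fixes A B :: "'a :: idom mat"
  assumes A: "A \<in> carrier_mat n1 n1" and B: "B \<in> carrier_mat n2 n2" and "0 < n1" "0 < n2"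
    and A_row: "\<And>j. j < n1 \<Longrightarrow> A $$ (0,j) = 0" and B_row: "\<And>j. j < n2 \<Longrightarrow> B $$ (0,j) = 0"
  shows "det (four_block_mat A (corner_mat n1 n2 c) (corner_mat n2 n1 d) B)
    = - (c * d * det (mat_delete A 0 0) * det (mat_delete B 0 0))"
proof -
  define N where "N = four_block_mat A (corner_mat n1 n2 c) (corner_mat n2 n1 d) B"
  define M where "M = mat_delete N 0 n1"
  have N: "N \<in> carrier_mat (n1 + n2) (n1 + n2)" using A B by (simp add: N_def)
  have M: "M \<in> carrier_mat (n1 + n2 - 1) (n1 + n2 - 1)" using mat_delete_carrier[OF N] by (simp add: M_def)
  have "det N = c * ((-1) ^ n1 * det M)"
    using det_row_single_entry[OF N, of 0 n1] assms
    by (simp add: N_def M_def cofactor_def corner_mat_def)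
  moreover have "det M = d * ((-1) ^ (n1 - 1) * det (mat_delete M (n1 - 1) 0))"
    using det_row_single_entry[OF M, of "n1 - 1" 0] assms
    by (simp add: N_def M_def cofactor_def corner_mat_def mat_delete_def)
  moreover have "det (mat_delete M (n1 - 1) 0) = det (mat_delete A 0 0) * det (mat_delete B 0 0)"
    unfolding M_def N_def mat_delete_four_block_corner[OF assms(1-4)]
    by (rule det_four_block_mat_upper_right_zero[OF mat_delete_carrier[OF A] refl _ mat_delete_carrier[OF B]]) simp
  ultimately have "det N = c * d * ((-1) ^ n1 * (-1) ^ (n1 - 1)) * (det (mat_delete A 0 0) * det (mat_delete B 0 0))"
    by (simp only: mult_ac)
  moreover have "(-1) ^ n1 * (-1) ^ (n1 - 1) = (-1 :: 'a)"
    using \<open>0 < n1\<close> by (cases n1) auto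
  ultimately show ?thesis by (simp add: N_def)
qed

lemma det_four_block_corner:
  fixes A B :: "'a :: idom mat"
  assumes A: "A \<in> carrier_mat n1 n1" and B: "B \<in> carrier_mat n2 n2" and "0 < n1" "0 < n2"
  shows "det (four_block_mat A (corner_mat n1 n2 c) (corner_mat n2 n1 d) B)
    = det A * det B - c * d * det (mat_delete A 0 0) * det (mat_delete B 0 0)"
proof -
  define A0 where "A0 = mat n1 n1 (\<lambda>(i,j). if i = 0 then 0 else A $$ (i,j))"
  define B0 where "B0 = mat n2 n2 (\<lambda>(i,j). if i = 0 then 0 else B $$ (i,j))"
  have A0: "A0 \<in> carrier_mat n1 n1" and B0: "B0 \<in> carrier_mat n2 n2" by (simp_all add: A0_def B0_def)
  have "det (four_block_mat A (corner_mat n1 n2 c) (corner_mat n2 n1 d) B)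
      = det (four_block_mat A (0\<^sub>m n1 n2) (corner_mat n2 n1 d) B)
      + det (four_block_mat A0 (corner_mat n1 n2 c) (corner_mat n2 n1 d) B)"
    by (rule det_add_row[of _ "n1 + n2" _ _ 0]) (use assms in \<open>auto simp: A0_def corner_mat_def\<close>)
  moreover have "det (four_block_mat A0 (corner_mat n1 n2 c) (corner_mat n2 n1 d) B)
      = det (four_block_mat A0 (corner_mat n1 n2 c) (0\<^sub>m n2 n1) B)
      + det (four_block_mat A0 (corner_mat n1 n2 c) (corner_mat n2 n1 d) B0)"
    by (rule det_add_row[of _ "n1 + n2" _ _ n1]) (use assms in \<open>auto simp: A0_def B0_def corner_mat_def\<close>)
  moreover have "det (four_block_mat A (0\<^sub>m n1 n2) (corner_mat n2 n1 d) B) = det A * det B"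
    by (rule det_four_block_mat_upper_right_zero[OF A refl _ B]) simp
  moreover have "det A0 = 0"
    using det_row_single_entry[OF A0 \<open>0 < n1\<close> \<open>0 < n1\<close>] \<open>0 < n1\<close> by (simp add: A0_def)
  then have "det (four_block_mat A0 (corner_mat n1 n2 c) (0\<^sub>m n2 n1) B) = 0"
    using det_four_block_mat_lower_left_zero[OF A0 _ refl B] by simp
  moreover have "mat_delete A0 0 0 = mat_delete A 0 0" "mat_delete B0 0 0 = mat_delete B 0 0"
    by (rule eq_matI; use A B in \<open>auto simp: A0_def B0_def mat_delete_def\<close>)+
  then have "det (four_block_mat A0 (corner_mat n1 n2 c) (corner_mat n2 n1 d) B0)
      = - (c * d * det (mat_delete A 0 0) * det (mat_delete B 0 0))"
    using det_four_block_corner_zero_first_rows[OF A0 B0 assms(3,4)] by (simp add: A0_def B0_def)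
  ultimately show ?thesis by simp
qed

lemma det_mat_delete_four_block_corner:
  fixes A B :: "'a :: idom mat"
  assumes A: "A \<in> carrier_mat n1 n1" and B: "B \<in> carrier_mat n2 n2" and "0 < n1"
  shows "det (mat_delete (four_block_mat A (corner_mat n1 n2 c) (corner_mat n2 n1 d) B) 0 0)
    = det (mat_delete A 0 0) * det B"
proof -
  have "mat_delete (four_block_mat A (corner_mat n1 n2 c) (corner_mat n2 n1 d) B) 0 0
      = four_block_mat (mat_delete A 0 0) (0\<^sub>m (n1 - 1) n2) (0\<^sub>m n2 (n1 - 1)) B"
    by (rule eq_matI) (use assms in \<open>auto simp: mat_delete_def corner_mat_def Suc_diff_le\<close>)
  then show ?thesis
    using det_four_block_mat_upper_right_zero[OF mat_delete_carrier[OF A] refl _ B] by simp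
qed

section \<open>Vertices and adjacency matrix of a joined tree\<close>

lemma children_tjoin [simp]: "children (tjoin T1 T2) = children T1 @ [T2]"
  by (simp add: tjoin_def)

lemma tjoin_induct [case_names leaf tjoin]:
  assumes "P (Node [])" and "\<And>T1 T2. P T1 \<Longrightarrow> P T2 \<Longrightarrow> P (tjoin T1 T2)"
  shows "P T"
proof (induction T)
  case (Node ts)
  then show ?case
  proof (induction ts rule: rev_induct)
    case (snoc S ts)
    then have "P (tjoin (Node ts) S)" using assms(2) by simp
    then show ?case by (simp add: tjoin_def)
  qed (rule assms(1))
qed

lemma finite_verts: "finite (verts T)"
  by (induction T rule: verts.induct) auto

lemma root_in_verts [simp]: "[] \<in> verts T"
  by (cases T) auto

lemma verts_tjoin:
  "verts (tjoin T1 T2) = verts T1 \<union> Cons (length (children T1)) ` verts T2"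
proof -
  obtain ts where T1: "T1 = Node ts" by (cases T1)
  have "(\<Union>i<Suc (length ts). Cons i ` verts ((ts @ [T2]) ! i))
      = (\<Union>i<length ts. Cons i ` verts (ts ! i)) \<union> Cons (length ts) ` verts T2"
    by (auto simp: lessThan_Suc nth_append)
  then show ?thesis by (simp add: T1 tjoin_def)
qed

lemma verts_children_bound: "i # p \<in> verts T \<Longrightarrow> i < length (children T)"
  by (cases T) auto

lemma set_vlist [simp]: "set (vlist T) = verts T"
  by (simp add: vlist_def finite_verts)

lemma sorted_wrt_vlist: "sorted_wrt (<) (vlist T)"
  by (simp add: vlist_def)

lemma length_vlist [simp]: "length (vlist T) = nverts T"
  by (simp add: vlist_def nverts_def)

lemma vlist_root_first: "vlist T = [] # sorted_list_of_set (verts T - {[]})"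
proof -
  have "verts T \<noteq> {}" using root_in_verts[of T] by blast
  moreover have "Min (verts T) = []" by (rule Min_eqI) (simp_all add: finite_verts)
  ultimately show ?thesis
    unfolding vlist_def using sorted_list_of_set_nonempty[OF finite_verts] by simp
qed

lemma nth_vlist_eq_Nil_iff:
  assumes "i < nverts T" shows "vlist T ! i = [] \<longleftrightarrow> i = 0"
proof -
  have "vlist T ! 0 = []" by (subst vlist_root_first) simp
  moreover have "distinct (vlist T)" using sorted_wrt_vlist strict_sorted_iff by blast
  ultimately show ?thesis using assms nth_eq_iff_index_eq[of "vlist T" i 0] by auto
qed

lemma vlist_tjoin:
  "vlist (tjoin T1 T2) = vlist T1 @ map (Cons (length (children T1))) (vlist T2)" (is "_ = ?l")
proof -
  have "sorted_wrt (<) ?l"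
    unfolding sorted_wrt_append sorted_wrt_map
  proof (intro conjI ballI)
    show "sorted_wrt (<) (vlist T1)" by (rule sorted_wrt_vlist)
    show "sorted_wrt (\<lambda>p q. length (children T1) # p < length (children T1) # q) (vlist T2)"
      using sorted_wrt_vlist[of T2] by (simp add: sorted_wrt_mono_rel)
    fix p q assume "p \<in> set (vlist T1)" "q \<in> set (map (Cons (length (children T1))) (vlist T2))"
    then have "p \<in> verts T1" "q \<in> Cons (length (children T1)) ` verts T2" by auto
    then show "p < q" by (cases p) (auto dest: verts_children_bound)
  qed
  then have "sorted ?l" "distinct ?l" by (simp_all add: strict_sorted_iff)
  then have "sorted_list_of_set (set ?l) = ?l"
    by (simp only: sorted_list_of_set_sort_remdups distinct_remdups_id sorted_sort_id)
  moreover have "set ?l = verts (tjoin T1 T2)" by (simp add: verts_tjoin)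
  ultimately show ?thesis by (simp add: vlist_def)
qed

lemma nverts_tjoin: "nverts (tjoin T1 T2) = nverts T1 + nverts T2"
  using arg_cong[OF vlist_tjoin, of length] by simp

lemma nverts_pos: "0 < nverts T"
  using vlist_root_first[of T] length_vlist[of T] by simp

lemma nth_vlist_in_verts [simp]: "i < nverts T \<Longrightarrow> vlist T ! i \<in> verts T"
  using nth_mem[of i "vlist T"] by simp

lemma nth_vlist_tjoin:
  "i < nverts T1 + nverts T2 \<Longrightarrow> vlist (tjoin T1 T2) ! i =
    (if i < nverts T1 then vlist T1 ! i else length (children T1) # vlist T2 ! (i - nverts T1))"
  by (simp add: vlist_tjoin nth_append)

lemma adj_tjoin_left:
  "p \<in> verts T1 \<Longrightarrow> q \<in> verts T1 \<Longrightarrow> adj (tjoin T1 T2) p q \<longleftrightarrow> adj T1 p q"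
  by (auto simp: adj_def verts_tjoin)

lemma adj_tjoin_right:
  "p \<in> verts T2 \<Longrightarrow> q \<in> verts T2 \<Longrightarrow>
    adj (tjoin T1 T2) (length (children T1) # p) (length (children T1) # q) \<longleftrightarrow> adj T2 p q"
  by (auto simp: adj_def verts_tjoin)

lemma adj_tjoin_cross:
  assumes "p \<in> verts T1" "q \<in> verts T2"
  shows "adj (tjoin T1 T2) p (length (children T1) # q) \<longleftrightarrow> p = [] \<and> q = []"
    and "adj (tjoin T1 T2) (length (children T1) # q) p \<longleftrightarrow> p = [] \<and> q = []"
proof -
  have "(\<exists>i. length (children T1) # q = p @ [i] \<or> p = (length (children T1) # q) @ [i])
      \<longleftrightarrow> p = [] \<and> q = []"
    using assms(1) by (cases p) (auto dest: verts_children_bound)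
  then show "adj (tjoin T1 T2) p (length (children T1) # q) \<longleftrightarrow> p = [] \<and> q = []"
    and "adj (tjoin T1 T2) (length (children T1) # q) p \<longleftrightarrow> p = [] \<and> q = []"
    using assms by (auto simp: adj_def verts_tjoin)
qed

lemma adj_mat_carrier: "adj_mat T \<in> carrier_mat (nverts T) (nverts T)"
  unfolding adj_mat_def by simp

lemma char_poly_matrix_adj_mat_carrier:
  "char_poly_matrix (adj_mat T) \<in> carrier_mat (nverts T) (nverts T)"
  using adj_mat_carrier by (rule char_poly_matrix_closed)

lemma dim_char_poly_matrix_adj_mat [simp]:
  "dim_row (char_poly_matrix (adj_mat T)) = nverts T"
  "dim_col (char_poly_matrix (adj_mat T)) = nverts T"
  using char_poly_matrix_adj_mat_carrier by auto

lemma index_char_poly_matrix_adj_mat: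
  assumes "i < nverts T" "j < nverts T"
  shows "char_poly_matrix (adj_mat T) $$ (i,j)
    = (if i = j then [:0,1:] else if adj T (vlist T ! i) (vlist T ! j) then -1 else 0)"
proof -
  have "adj_mat T $$ (i,j) = (if adj T (vlist T ! i) (vlist T ! j) then 1 else 0)"
    using assms by (simp add: adj_mat_def)
  moreover have "\<not> adj T p p" for p by (simp add: adj_def)
  moreover have "[:-1:] = (-1 :: real poly)" by (simp only: one_pCons minus_pCons minus_zero)
  ultimately show ?thesis using assms adj_mat_carrier[of T] by (auto simp: char_poly_matrix_def)
qed

lemma char_poly_matrix_adj_mat_tjoin:
  "char_poly_matrix (adj_mat (tjoin T1 T2)) = four_block_mat
     (char_poly_matrix (adj_mat T1)) (corner_mat (nverts T1) (nverts T2) (-1))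
     (corner_mat (nverts T2) (nverts T1) (-1)) (char_poly_matrix (adj_mat T2))"
  (is "?L = ?R")
proof (rule eq_matI)
  let ?n1 = "nverts T1" and ?n2 = "nverts T2"
  fix i j assume "i < dim_row ?R" "j < dim_col ?R"
  then have i: "i < ?n1 + ?n2" and j: "j < ?n1 + ?n2" by simp_all
  have L: "?L $$ (i,j) = (if i = j then [:0,1:]
      else if adj (tjoin T1 T2) (vlist (tjoin T1 T2) ! i) (vlist (tjoin T1 T2) ! j) then -1 else 0)"
    using i j by (simp add: index_char_poly_matrix_adj_mat nverts_tjoin)
  have R: "?R $$ (i,j) = (if i < ?n1 then if j < ?n1 then char_poly_matrix (adj_mat T1) $$ (i,j)
        else corner_mat ?n1 ?n2 (-1) $$ (i, j - ?n1)
      else if j < ?n1 then corner_mat ?n2 ?n1 (-1) $$ (i - ?n1, j)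
        else char_poly_matrix (adj_mat T2) $$ (i - ?n1, j - ?n1))"
    using i j by simp
  consider "i < ?n1" "j < ?n1" | "i < ?n1" "j - ?n1 < ?n2" "\<not> j < ?n1"
    | "i - ?n1 < ?n2" "\<not> i < ?n1" "j < ?n1" | "i - ?n1 < ?n2" "j - ?n1 < ?n2" "\<not> i < ?n1" "\<not> j < ?n1"
    using i j by linarith
  then show "?L $$ (i,j) = ?R $$ (i,j)"
  proof cases
    case 1
    then show ?thesis
      unfolding L R by (simp add: nth_vlist_tjoin adj_tjoin_left index_char_poly_matrix_adj_mat)
  next
    case 2
    then show ?thesis
      unfolding L R by (simp add: nth_vlist_tjoin adj_tjoin_cross corner_mat_def nth_vlist_eq_Nil_iff)
  next
    case 3
    then show ?thesis
      unfolding L R by (simp add: nth_vlist_tjoin adj_tjoin_cross corner_mat_def nth_vlist_eq_Nil_iff)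
  next
    case 4
    moreover have "i = j \<longleftrightarrow> i - ?n1 = j - ?n1" using 4 by auto
    ultimately show ?thesis
      unfolding L R by (simp add: nth_vlist_tjoin adj_tjoin_right index_char_poly_matrix_adj_mat)
  qed
qed (simp_all add: nverts_tjoin)

section \<open>Characteristic polynomials\<close>

lemma nverts_leaf: "nverts (Node []) = 1"
  by (simp add: nverts_def)

lemma nverts_children: "nverts T = Suc (sum_list (map nverts (children T)))"
  by (induction T rule: tjoin_induct) (simp_all add: nverts_leaf nverts_tjoin)

lemma chi_leaf: "chi (Node []) = [:0,1:]"
proof -
  have "char_poly_matrix (adj_mat (Node [])) \<in> carrier_mat 1 1"
    using char_poly_matrix_adj_mat_carrier[of "Node []"] by (simp add: nverts_leaf)
  then show ?thesis
    by (simp add: chi_def char_poly_def det_single index_char_poly_matrix_adj_mat nverts_leaf)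
qed

lemma det_char_poly_matrix_delete_root:
  "det (mat_delete (char_poly_matrix (adj_mat T)) 0 0) = prod_list (map chi (children T))"
proof (induction T rule: tjoin_induct)
  case leaf
  have "mat_delete (char_poly_matrix (adj_mat (Node []))) 0 0 \<in> carrier_mat 0 0"
    using mat_delete_carrier[OF char_poly_matrix_adj_mat_carrier[of "Node []"]] by (simp add: nverts_leaf)
  then show ?case by (simp add: det_dim_zero)
next
  case (tjoin T1 T2)
  then show ?case
    using det_mat_delete_four_block_corner[OF char_poly_matrix_adj_mat_carrier
        char_poly_matrix_adj_mat_carrier nverts_pos]
    by (simp add: char_poly_matrix_adj_mat_tjoin chi_def char_poly_def)
qed

lemma chi_tjoin:
  "chi (tjoin T1 T2) = chi T1 * chi T2 - prod_list (map chi (children T1)) * prod_list (map chi (children T2))"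
  using det_four_block_corner[OF char_poly_matrix_adj_mat_carrier char_poly_matrix_adj_mat_carrier
      nverts_pos nverts_pos, of T1 T2 "-1" "-1"]
  by (simp add: chi_def char_poly_def char_poly_matrix_adj_mat_tjoin det_char_poly_matrix_delete_root)

lemma chi_nonzero: "chi T \<noteq> 0"
  using degree_monic_char_poly[OF adj_mat_carrier, of T] by (auto simp: chi_def)

section \<open>Reciprocal polynomials\<close>

text \<open>With \<open>z = s\<^sup>2\<close>, the identity defining \<open>recip\<close> becomes free of \<open>powr\<close> and \<open>sqrt\<close>.\<close>

definition is_reciprocal :: "nat \<Rightarrow> real poly \<Rightarrow> real poly \<Rightarrow> bool" where
  "is_reciprocal n p r \<longleftrightarrow> (\<forall>s > 0. poly r (s\<^sup>2) = s ^ n * poly p (s + 1 / s))"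

lemma poly_eq_if_eq_on_positive:
  fixes p q :: "real poly"
  assumes "\<And>z. z > 0 \<Longrightarrow> poly p z = poly q z"
  shows "p = q"
proof (rule ccontr)
  assume "p \<noteq> q"
  then have "finite {z. poly (p - q) z = 0}" by (intro poly_roots_finite) simp
  moreover have "{0<..} \<subseteq> {z. poly (p - q) z = 0}" using assms by auto
  ultimately show False using infinite_Ioi finite_subset by blast
qed

lemma is_reciprocal_unique: "is_reciprocal n p r \<Longrightarrow> is_reciprocal n p r' \<Longrightarrow> r = r'"
  unfolding is_reciprocal_def
  by (rule poly_eq_if_eq_on_positive) (metis real_sqrt_gt_0_iff real_sqrt_pow2 less_eq_real_def)

lemma is_reciprocal_nonzero:
  assumes "is_reciprocal n p r" and "p \<noteq> 0"
  shows "r \<noteq> 0"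
proof
  assume "r = 0"
  obtain B where B: "\<And>x. poly p x = 0 \<Longrightarrow> x \<le> B"
    using bdd_above_finite[OF poly_roots_finite[OF \<open>p \<noteq> 0\<close>]] by (auto simp: bdd_above_def)
  define s where "s = max B 1 + 1"
  have "s > 0" by (simp add: s_def)
  then have "poly p (s + 1 / s) = 0" using assms(1) \<open>r = 0\<close> by (simp add: is_reciprocal_def)
  then have "s + 1 / s \<le> B" by (rule B)
  moreover have "B < s" "0 < 1 / s" using \<open>s > 0\<close> by (simp_all add: s_def)
  ultimately show False by linarith
qed

lemma is_reciprocal_one: "is_reciprocal 0 1 1"
  by (simp add: is_reciprocal_def)

lemma is_reciprocal_X: "is_reciprocal 1 [:0,1:] [:1,1:]"
  by (simp add: is_reciprocal_def power2_eq_square field_simps)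

lemma is_reciprocal_mult:
  "is_reciprocal m p r \<Longrightarrow> is_reciprocal n q u \<Longrightarrow> is_reciprocal (m + n) (p * q) (r * u)"
  by (simp add: is_reciprocal_def power_add)

lemma is_reciprocal_diff:
  "is_reciprocal n p r \<Longrightarrow> is_reciprocal n q u \<Longrightarrow> is_reciprocal n (p - q) (r - u)"
  by (simp add: is_reciprocal_def algebra_simps)

lemma is_reciprocal_shift:
  "is_reciprocal n p r \<Longrightarrow> is_reciprocal (n + 2) p ([:0,1:] * r)"
  by (simp add: is_reciprocal_def power_add power2_eq_square)

lemma recip_eq:
  assumes "is_reciprocal (nverts T) (chi T) r"
  shows "recip T = r"
proof -
  have "(\<forall>z > 0. poly q z = z powr (real (nverts T) / 2) * poly (chi T) (sqrt z + 1 / sqrt z))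
      \<longleftrightarrow> is_reciprocal (nverts T) (chi T) q" for q
  proof -
    have "z powr (real (nverts T) / 2) = sqrt z ^ nverts T" if "z > 0" for z :: real
      using that by (simp add: powr_half_sqrt[symmetric] powr_realpow[symmetric] powr_powr)
    then show ?thesis
      unfolding is_reciprocal_def by (metis real_sqrt_gt_0_iff real_sqrt_pow2 less_eq_real_def
          real_sqrt_abs abs_of_pos zero_less_power)
  qed
  then show ?thesis
    unfolding recip_def using assms is_reciprocal_unique by (intro the_equality) auto
qed

lemma is_reciprocal_tjoin:
  assumes "is_reciprocal (nverts T1) (chi T1) r1"
    and "is_reciprocal (sum_list (map nverts (children T1))) (prod_list (map chi (children T1))) f1"
    and "is_reciprocal (nverts T2) (chi T2) r2"
    and "is_reciprocal (sum_list (map nverts (children T2))) (prod_list (map chi (children T2))) f2"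
  shows "is_reciprocal (nverts (tjoin T1 T2)) (chi (tjoin T1 T2)) (r1 * r2 - [:0,1:] * f1 * f2)"
proof -
  have "nverts T1 + nverts T2 = sum_list (map nverts (children T1)) + sum_list (map nverts (children T2)) + 2"
    using nverts_children[of T1] nverts_children[of T2] by simp
  then have "is_reciprocal (nverts T1 + nverts T2)
      (prod_list (map chi (children T1)) * prod_list (map chi (children T2))) ([:0,1:] * (f1 * f2))"
    using is_reciprocal_shift[OF is_reciprocal_mult[OF assms(2,4)]] by simp
  then show ?thesis
    using is_reciprocal_diff[OF is_reciprocal_mult[OF assms(1,3)]]
    by (simp add: chi_tjoin nverts_tjoin mult.assoc)
qed

lemma recip_leaf: "recip (Node []) = [:1,1:]"
  using is_reciprocal_X by (intro recip_eq) (simp add: nverts_leaf chi_leaf)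

text \<open>The second conjunct is carried along because the join recurrence needs the reciprocal
  of the product over the children.\<close>

lemma is_reciprocal_recip_and_children:
  "is_reciprocal (nverts T) (chi T) (recip T)
    \<and> is_reciprocal (sum_list (map nverts (children T))) (prod_list (map chi (children T)))
        (prod_list (map recip (children T)))"
proof (induction T rule: tjoin_induct)
  case leaf
  show ?case using is_reciprocal_X is_reciprocal_one by (simp add: nverts_leaf chi_leaf recip_leaf)
next
  case (tjoin T1 T2)
  then have "recip (tjoin T1 T2) = recip T1 * recip T2
      - [:0,1:] * prod_list (map recip (children T1)) * prod_list (map recip (children T2))"
    by (intro recip_eq is_reciprocal_tjoin) auto
  then show ?case
    using tjoin is_reciprocal_tjoin is_reciprocal_mult[of _ "prod_list (map chi (children T1))"]
    by auto
qed

lemma recip_tjoin: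
  "recip (tjoin T1 T2) = recip T1 * recip T2
    - [:0,1:] * prod_list (map recip (children T1)) * prod_list (map recip (children T2))"
  using is_reciprocal_recip_and_children by (intro recip_eq is_reciprocal_tjoin) auto

lemma recip_nonzero: "recip T \<noteq> 0"
  using is_reciprocal_nonzero[OF conjunct1[OF is_reciprocal_recip_and_children] chi_nonzero] .

lemma prod_list_recip_nonzero: "prod_list (map recip ts) \<noteq> 0"
  using recip_nonzero by auto

section \<open>Quotients\<close>

lemma Z_conv_to_fract: "Z = to_fract [:0,1:]"
  by (simp add: Z_def to_fract_def)

lemma tquot_conv_to_fract: "tquot T = to_fract (prod_list (map recip (children T))) / to_fract (recip T)"
  by (simp add: tquot_def Fract_conv_to_fract)

lemma to_fract_recip_tjoin:
  "to_fract (recip (tjoin T1 T2)) = to_fract (recip T1) * to_fract (recip T2)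
    - Z * to_fract (prod_list (map recip (children T1))) * to_fract (prod_list (map recip (children T2)))"
  unfolding recip_tjoin Z_conv_to_fract to_fract_diff to_fract_mult ..

lemma Z_plus_one_minus_Z_fquot_children:
  "Z + 1 - Z * fquot (children T) = to_fract (recip T) / to_fract (prod_list (map recip (children T)))"
proof (induction T rule: tjoin_induct)
  case leaf
  have "[:1,1:] = [:0,1:] + (1 :: real poly)" by (simp add: one_pCons)
  then show ?case by (simp add: fquot_def recip_leaf Z_conv_to_fract)
next
  case (tjoin T1 T2)
  define r1 r2 p1 p2 where "r1 = to_fract (recip T1)" and "r2 = to_fract (recip T2)"
    and "p1 = to_fract (prod_list (map recip (children T1)))"
    and "p2 = to_fract (prod_list (map recip (children T2)))"
  have "r2 \<noteq> 0" "p1 \<noteq> 0"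
    using recip_nonzero prod_list_recip_nonzero by (simp_all add: r2_def p1_def)
  have "Z + 1 - Z * fquot (children (tjoin T1 T2)) = (Z + 1 - Z * fquot (children T1)) - Z * tquot T2"
    by (simp add: fquot_def algebra_simps)
  also have "\<dots> = r1 / p1 - Z * (p2 / r2)"
    unfolding tjoin.IH(1) tquot_conv_to_fract r1_def r2_def p1_def p2_def ..
  also have "\<dots> = (r1 * r2 - Z * p1 * p2) / (p1 * r2)"
    using \<open>r2 \<noteq> 0\<close> \<open>p1 \<noteq> 0\<close> by (simp add: field_simps)
  also have "\<dots> = to_fract (recip (tjoin T1 T2)) / to_fract (prod_list (map recip (children (tjoin T1 T2))))"
    by (simp add: to_fract_recip_tjoin r1_def r2_def p1_def p2_def)
  finally show ?case .
qed

theorem lemma15: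
  fixes T1 T2 :: rtree
  shows "tquot (tjoin T1 T2) = tquot T1 / (1 - Z * tquot T1 * tquot T2)
    \<and> tquot (tjoin T1 T2) =
        (Z + 1 - Z * fquot (children T2)) /
        ((Z + 1 - Z * fquot (children T1)) * (Z + 1 - Z * fquot (children T2)) - Z)"
proof -
  define r1 r2 p1 p2 where "r1 = to_fract (recip T1)" and "r2 = to_fract (recip T2)"
    and "p1 = to_fract (prod_list (map recip (children T1)))"
    and "p2 = to_fract (prod_list (map recip (children T2)))"
  have nonzero: "r1 \<noteq> 0" "r2 \<noteq> 0" "p1 \<noteq> 0" "p2 \<noteq> 0"
    using recip_nonzero prod_list_recip_nonzero by (simp_all add: r1_def r2_def p1_def p2_def)
  have recip_join: "to_fract (recip (tjoin T1 T2)) = r1 * r2 - Z * p1 * p2"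
    unfolding to_fract_recip_tjoin r1_def r2_def p1_def p2_def ..
  then have denom: "r1 * r2 - Z * p1 * p2 \<noteq> 0"
    by (metis recip_nonzero to_fract_eq_0_iff)
  have "to_fract (prod_list (map recip (children (tjoin T1 T2)))) = p1 * r2"
    by (simp add: p1_def r2_def)
  then have join: "tquot (tjoin T1 T2) = p1 * r2 / (r1 * r2 - Z * p1 * p2)"
    unfolding tquot_conv_to_fract recip_join by simp
  have quotients: "tquot T1 = p1 / r1" "tquot T2 = p2 / r2"
    "Z + 1 - Z * fquot (children T1) = r1 / p1" "Z + 1 - Z * fquot (children T2) = r2 / p2"
    by (simp_all add: tquot_conv_to_fract Z_plus_one_minus_Z_fquot_children r1_def r2_def p1_def p2_def)
  show ?thesis
    unfolding join quotients using nonzero denom by (simp add: field_simps)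
qed

end
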